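(* Let $p$ be an odd prime and let $a,b\in\mathbb{Z}$ with $ab\equiv-1\pmod p$. Define $$\{a,b\}_p=\prod_{\substack{i,j=1\\ i\not\equiv aj,\ i\not\equiv bj\ (\mathrm{mod}\ p)}}^{(p-1)/2}(i-aj)(i-bj),$$ which is congruent modulo $p$ to $T_p(1,-(a+b),-1)$. (i) If $p\equiv1\pmod 4$ and $p\nmid a-b$, then $-\{a,b\}_p\equiv\left(\frac{a-b}{p}\right)\pmod p$; if $p\equiv3\pmod4$, then $-\{a,b\}_p\equiv\left(\frac{a(a-b)}{p}\right)=\left(\frac{a^2+1}{p}\right)\pmod p$. (ii) If $a\equiv b\pmod p$ and $p\equiv1\pmod8$, then $\{a,b\}_p\equiv(-1)^{(p+7)/8}\,\left(\frac{p-1}{2}\right)!\pmod p$. If $p\equiv5\pmod8$ and $a\equiv b\equiv(-1)^k\left(\frac{p-1}{2}\right)!\pmod p$ with $k\in\{0,1\}$, then $\{a,b\}_p\equiv(-1)^{k+(p-5)/8}\pmod p$.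
   Context: $\left(\frac{\cdot}{p}\right)$ denotes the Legendre symbol. For an odd prime $p$ and $a,b,c\in\mathbb{Z}$, $T_p(a,b,c)=\prod_{i,j=1,\ p\nmid ai^2+bij+cj^2}^{(p-1)/2}(ai^2+bij+cj^2)$. *)

theory Defs
  imports "HOL-Number_Theory.Number_Theory"
begin

definition Tp :: "nat \<Rightarrow> int \<Rightarrow> int \<Rightarrow> int \<Rightarrow> int" where
  "Tp p a b c =
     (\<Prod>(i,j) \<in> {(i,j). i \<in> {1..(p-1) div 2} \<and> j \<in> {1..(p-1) div 2}
                        \<and> \<not> (int p dvd a * int i ^ 2 + b * int i * int j + c * int j ^ 2)}.
        a * int i ^ 2 + b * int i * int j + c * int j ^ 2)"

definition brk :: "int \<Rightarrow> int \<Rightarrow> nat \<Rightarrow> int" where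
  "brk a b p =
     (\<Prod>(i,j) \<in> {(i,j). i \<in> {1..(p-1) div 2} \<and> j \<in> {1..(p-1) div 2}
                        \<and> \<not> [int i = a * int j] (mod int p) \<and> \<not> [int i = b * int j] (mod int p)}.
        (int i - a * int j) * (int i - b * int j))"

end

theory Submission
  imports Defs
begin

text \<open>
  Write h = (p - 1)/2. The map (i, j) \<mapsto> (j, p - i) carries the index set of {a,b}_p onto the
  pairs (x, y) with x \<le> h < y < p; since ab \<equiv> -1 it exchanges the two excluded congruences,
  and j - a(p - i) \<equiv> a(i - bj). Hence a^N {a,b}_p is congruent to the product, over the rows
  x \<le> h, of the products of x - ay over the units y with x \<noteq> ay and x \<noteq> by (mod p).
  As y runs over all units, x - ay runs over all residues except x, so by Wilson's theorem a row
  contributes -1/x when a \<equiv> b and -1/(x^2 (1 + a^2)) otherwise, the extra excluded unit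
  y \<equiv> -ax accounting for the factor x (1 + a^2). Multiplying the rows, (h!)^2 \<equiv> (-1)^(h+1),
  Euler's criterion, and a^2 \<equiv> -1 when a \<equiv> b give the stated values.
\<close>

lemma Legendre_cong:
  assumes "[x = y] (mod m)"
  shows "Legendre x m = Legendre y m"
proof -
  have "[x = 0] (mod m) \<longleftrightarrow> [y = 0] (mod m)"
    using assms by (meson cong_sym cong_trans)
  moreover have "QuadRes m x \<longleftrightarrow> QuadRes m y"
    unfolding QuadRes_def using assms by (meson cong_sym cong_trans)
  ultimately show ?thesis
    unfolding Legendre_def by simp
qed

lemma Legendre_square:
  assumes "prime (int p)" and "\<not> int p dvd x"
  shows "Legendre x (int p) ^ 2 = 1"
  using assms unfolding Legendre_def by (simp add: cong_0_iff)

lemma minus_cong_Legendre_if_power_mult_cong: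
  assumes "prime p" and "2 < p" and "\<not> int p dvd x"
    and "[x ^ ((p - 1) div 2) * y = -1] (mod int p)"
  shows "[- y = Legendre x (int p)] (mod int p)"
proof -
  let ?L = "Legendre x (int p)"
  have "[?L * y = x ^ ((p - 1) div 2) * y] (mod int p)"
    using euler_criterion[OF assms(1,2)] by (rule cong_mult) simp
  then have "[?L * (?L * y) = ?L * -1] (mod int p)"
    using assms(4) by (meson cong_scalar_left cong_trans)
  moreover have "?L * (?L * y) = y"
    using Legendre_square[of p x] assms(1,3) by (simp add: power2_eq_square flip: mult.assoc)
  ultimately have "[y = - ?L] (mod int p)" by simp
  then show ?thesis by (metis cong_minus_minus_iff minus_minus)
qed

lemma fermat_theorem_int:
  assumes "prime p" and "\<not> int p dvd x"
  shows "[x ^ (p - 1) = 1] (mod int p)"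
proof -
  define y where "y = nat (x mod int p)"
  have "int p > 0" using prime_gt_0_nat[OF assms(1)] by simp
  then have y: "int y = x mod int p" unfolding y_def by simp
  then have "\<not> int p dvd int y" using assms(2) by (simp add: dvd_mod_iff)
  then have "[int y ^ (p - 1) = 1] (mod int p)"
    using fermat_theorem[OF assms(1)] by (metis cong_int_iff int_dvd_int_iff of_nat_1 of_nat_power)
  moreover have "[int y ^ (p - 1) = x ^ (p - 1)] (mod int p)"
    unfolding y by (intro cong_pow) (simp add: cong_def)
  ultimately show ?thesis by (meson cong_sym cong_trans)
qed

lemma half_factorial_square_cong:
  assumes "prime p" and "odd p"
  shows "[(fact ((p - 1) div 2) :: int) ^ 2 = (-1) ^ ((p - 1) div 2 + 1)] (mod int p)"
proof -
  define h where "h = (p - 1) div 2"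
  define F :: int where "F = fact h"
  have hp: "p = 2 * h + 1" unfolding h_def using assms(2) by presburger
  have "{1..p - 1} = {1..h} \<union> {h + 1..p - 1}" using hp by auto
  then have "(fact (p - 1) :: int) = F * (\<Prod>z\<in>{h + 1..p - 1}. int z)"
    unfolding F_def by (simp add: fact_prod prod.union_disjoint)
  also have "(\<Prod>z\<in>{h + 1..p - 1}. int z) = (\<Prod>i\<in>{1..h}. int p - int i)"
    by (rule prod.reindex_bij_witness[where i="\<lambda>i. p - i" and j="\<lambda>z. p - z"]) (use hp in auto)
  finally have "(fact (p - 1) :: int) = F * (\<Prod>i\<in>{1..h}. int p - int i)" .
  moreover have "[(\<Prod>i\<in>{1..h}. int p - int i) = (\<Prod>i\<in>{1..h}. - int i)] (mod int p)"
    by (rule cong_prod) (simp add: cong_iff_dvd_diff)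
  ultimately have "[fact (p - 1) = F * (\<Prod>i\<in>{1..h}. - int i)] (mod int p)"
    by (simp add: cong_scalar_left)
  moreover have "(\<Prod>i\<in>{1..h}. - int i) = (-1) ^ h * F"
    unfolding F_def by (simp add: prod_uminus fact_prod)
  ultimately have "[(-1) ^ h * (F * ((-1) ^ h * F)) = (-1) ^ h * -1] (mod int p)"
    using wilson_theorem[OF assms(1)] by (metis cong_scalar_left cong_sym cong_trans)
  then show ?thesis
    unfolding F_def h_def by (simp add: power2_eq_square algebra_simps flip: power_add)
qed

lemma inj_on_affine_mod:
  assumes "prime p" and "\<not> int p dvd a"
  shows "inj_on (\<lambda>y. nat ((c - a * int y) mod int p)) {0..p - 1}"
proof (rule inj_onI)
  fix y z assume yz: "y \<in> {0..p - 1}" "z \<in> {0..p - 1}"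
    and "nat ((c - a * int y) mod int p) = nat ((c - a * int z) mod int p)"
  then have "[c - a * int y = c - a * int z] (mod int p)"
    unfolding cong_def using prime_gt_0_nat[OF assms(1)] by (simp add: eq_nat_nat_iff)
  moreover have "c - a * int y - (c - a * int z) = a * (int z - int y)"
    by (simp add: algebra_simps)
  ultimately have "int p dvd a * (int z - int y)"
    by (metis cong_iff_dvd_diff)
  then have "[int y = int z] (mod int p)"
    using assms by (simp add: prime_dvd_mult_iff cong_iff_dvd_diff dvd_diff_commute)
  moreover have "int y < int p" "int z < int p"
    using yz prime_gt_0_nat[OF assms(1)] by auto
  ultimately show "y = z"
    by (simp add: cong_def)
qed

lemma bij_betw_affine_mod:
  assumes "prime p" and "\<not> int p dvd a" and x: "x \<in> {1..p - 1}"
  shows "bij_betw (\<lambda>y. nat ((int x - a * int y) mod int p))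
    {y \<in> {1..p - 1}. \<not> [int x = a * int y] (mod int p)} ({1..p - 1} - {x})"
proof -
  define f where "f = (\<lambda>y. nat ((int x - a * int y) mod int p))"
  have p0: "int p > 0" using prime_gt_0_nat[OF assms(1)] by simp
  have f: "int (f y) = (int x - a * int y) mod int p" for y
    unfolding f_def using p0 by simp
  have f_le: "f y \<le> p - 1" for y
  proof -
    have "int (f y) < int p" unfolding f using p0 by simp
    then show ?thesis by linarith
  qed
  have inj: "inj_on f {0..p - 1}"
    unfolding f_def by (rule inj_on_affine_mod[OF assms(1,2)])
  have "f ` {0..p - 1} = {0..p - 1}"
    using f_le by (intro endo_inj_surj[OF _ _ inj]) auto
  moreover have "f 0 = x" and "{1..p - 1} = {0..p - 1} - {0}"
    using x unfolding f_def by auto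
  ultimately have image_units: "f ` {1..p - 1} = {0..p - 1} - {x}"
    using inj_on_image_set_diff[OF inj, of "{0..p - 1}" "{0}"] by simp
  have "f y = 0 \<longleftrightarrow> [int x = a * int y] (mod int p)" for y
    using f[of y] by (auto simp: cong_iff_dvd_diff)
  then have "{y \<in> {1..p - 1}. \<not> [int x = a * int y] (mod int p)} = {y \<in> {1..p - 1}. f y \<noteq> 0}"
    by simp
  then have "f ` {y \<in> {1..p - 1}. \<not> [int x = a * int y] (mod int p)} = f ` {1..p - 1} - {0}"
    by auto
  then have "f ` {y \<in> {1..p - 1}. \<not> [int x = a * int y] (mod int p)} = {1..p - 1} - {x}"
    unfolding image_units by auto
  moreover have "inj_on f {y \<in> {1..p - 1}. \<not> [int x = a * int y] (mod int p)}"
    by (rule inj_on_subset[OF inj]) auto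
  ultimately show ?thesis
    unfolding bij_betw_def f_def by simp
qed

lemma prod_affine_units_cong:
  assumes "prime p" and "\<not> int p dvd a" and x: "x \<in> {1..p - 1}"
  defines "D \<equiv> {y \<in> {1..p - 1}. \<not> [int x = a * int y] (mod int p)}"
  shows "[int x * (\<Prod>y\<in>D. int x - a * int y) = -1] (mod int p) \<and> card D = p - 2"
proof -
  define f where "f = (\<lambda>y. nat ((int x - a * int y) mod int p))"
  have bij: "bij_betw f D ({1..p - 1} - {x})"
    unfolding f_def D_def by (rule bij_betw_affine_mod[OF assms(1-3)])
  have "int p > 0" using prime_gt_0_nat[OF assms(1)] by simp
  then have "[(\<Prod>y\<in>D. int x - a * int y) = (\<Prod>y\<in>D. int (f y))] (mod int p)"
    unfolding f_def by (intro cong_prod) (simp add: cong_def)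
  also have "(\<Prod>y\<in>D. int (f y)) = (\<Prod>z\<in>{1..p - 1} - {x}. int z)"
    using prod.reindex_bij_betw[OF bij, of int] .
  finally have "[int x * (\<Prod>y\<in>D. int x - a * int y) = int x * (\<Prod>z\<in>{1..p - 1} - {x}. int z)] (mod int p)"
    by (rule cong_scalar_left)
  also have "int x * (\<Prod>z\<in>{1..p - 1} - {x}. int z) = fact (p - 1)"
    using x by (simp add: fact_prod prod.remove)
  also have "[fact (p - 1) = -1] (mod int p)"
    by (rule wilson_theorem[OF assms(1)])
  finally show ?thesis
    using bij_betw_same_card[OF bij] x by simp
qed

lemma cong_swap_if_mult_cong_minus_one:
  fixes a b i j m :: int
  assumes "[a * b = -1] (mod m)"
  shows "[j = a * (m - i)] (mod m) \<longleftrightarrow> [i = b * j] (mod m)"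
proof -
  have c: "m dvd a * b + 1" using assms by (simp add: cong_iff_dvd_diff)
  have "i - b * j = - b * (j - a * (m - i)) + (a * b + 1) * i - a * b * m"
    and "j - a * (m - i) = a * (i - b * j) + (a * b + 1) * j - a * m"
    by (simp_all add: algebra_simps)
  with c show ?thesis
    unfolding cong_iff_dvd_diff by (metis dvd_add dvd_diff dvd_mult dvd_mult2 dvd_triv_right)
qed

lemma minus_one_power_add_mult_two: "(-1 :: 'a :: ring_1) ^ (n + 2 * m) = (-1) ^ n"
  by (simp add: power_add power_mult)

lemma minus_one_power_mult_cong_iff:
  fixes x y m :: int
  shows "[(-1) ^ n * x = y] (mod m) \<longleftrightarrow> [x = (-1) ^ n * y] (mod m)"
proof -
  have inv: "(-1) ^ n * ((-1) ^ n * z) = z" for z :: int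
    by (simp flip: mult.assoc power_add)
  show ?thesis
    using cong_scalar_left[of _ _ m "(-1) ^ n"] inv by metis
qed

lemma power_cong_if_square_cong_minus_one:
  fixes a m :: int
  assumes "[a ^ 2 = -1] (mod m)"
  shows "[a ^ n = (-1) ^ (n div 2) * a ^ (n mod 2)] (mod m)"
proof -
  have "a ^ n = (a ^ 2) ^ (n div 2) * a ^ (n mod 2)"
    by (metis div_mult_mod_eq power_add power_mult mult.commute)
  then show ?thesis
    using assms by (simp add: cong_mult cong_pow)
qed

lemma cong_eq_minus_mult_if_square_cong_minus_one:
  fixes F x y m :: int
  assumes "[F ^ 2 = -1] (mod m)" and "[F * x = y] (mod m)"
  shows "[x = - (F * y)] (mod m)"
proof -
  have "[F ^ 2 * x = -1 * x] (mod m)" using assms(1) by (rule cong_mult) simp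
  moreover have "[F ^ 2 * x = F * y] (mod m)"
    using cong_scalar_left[OF assms(2), of F] by (simp add: power2_eq_square mult.assoc)
  ultimately have "[- x = F * y] (mod m)" by (metis cong_sym cong_trans mult_minus1)
  then show ?thesis by (metis cong_minus_minus_iff minus_minus)
qed

definition brk_pairs :: "int \<Rightarrow> int \<Rightarrow> nat \<Rightarrow> (nat \<times> nat) set" where
  "brk_pairs a b p = {(i, j). i \<in> {1..(p - 1) div 2} \<and> j \<in> {1..(p - 1) div 2}
     \<and> \<not> [int i = a * int j] (mod int p) \<and> \<not> [int i = b * int j] (mod int p)}"

definition brk_row :: "int \<Rightarrow> int \<Rightarrow> nat \<Rightarrow> nat \<Rightarrow> nat set" where
  "brk_row a b p x = {y \<in> {1..p - 1}.
     \<not> [int x = a * int y] (mod int p) \<and> \<not> [int x = b * int y] (mod int p)}"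

lemma brk_eq_prod_brk_pairs:
  "brk a b p = (\<Prod>(i, j)\<in>brk_pairs a b p. (int i - a * int j) * (int i - b * int j))"
  by (simp add: brk_def brk_pairs_def)

lemma finite_brk_pairs [simp]: "finite (brk_pairs a b p)"
  unfolding brk_pairs_def
  by (rule finite_subset[of _ "{1..(p - 1) div 2} \<times> {1..(p - 1) div 2}"]) auto

lemma finite_brk_row [simp]: "finite (brk_row a b p x)"
  unfolding brk_row_def by simp

context
  fixes p :: nat and a b :: int
  assumes prime: "prime p" and odd: "odd p" and ab: "[a * b = -1] (mod int p)"
begin

lemma two_less_p: "2 < p"
  using prime_ge_2_nat[OF prime] odd by (cases "p = 2") auto

lemma double_half_plus_one: "2 * ((p - 1) div 2) + 1 = p"
  using odd two_less_p by presburger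

lemma dvd_ab_plus_one: "int p dvd a * b + 1"
  using ab by (simp add: cong_iff_dvd_diff)

lemma not_dvd_a: "\<not> int p dvd a"
proof
  assume "int p dvd a"
  then have "int p dvd 1" using dvd_ab_plus_one by (metis dvd_add_right_iff dvd_mult2)
  then show False using prime by (simp add: prime_int_iff)
qed

lemma not_dvd_residue: "y \<in> {1..p - 1} \<Longrightarrow> \<not> int p dvd int y"
  by (auto dest: dvd_imp_le)

lemma square_cong_minus_one_if_same:
  assumes "[a = b] (mod int p)"
  shows "[a ^ 2 = -1] (mod int p)"
proof -
  have "[a * a = a * b] (mod int p)" using assms by (rule cong_scalar_left)
  then show ?thesis using ab by (simp add: power2_eq_square) (meson cong_trans)
qed

lemma mult_diff_cong_one_plus_square: "[a * (a - b) = 1 + a ^ 2] (mod int p)"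
proof -
  have "a * (a - b) - (1 + a ^ 2) = - (a * b + 1)"
    by (simp add: algebra_simps power2_eq_square)
  then show ?thesis
    unfolding cong_iff_dvd_diff using dvd_ab_plus_one by (simp only: dvd_minus_iff)
qed

lemma brk_cong_Tp: "[brk a b p = Tp p 1 (-(a + b)) (-1)] (mod int p)"
proof -
  have factor: "1 * i ^ 2 + -(a + b) * i * j + -1 * j ^ 2
      = (i - a * j) * (i - b * j) - (a * b + 1) * j ^ 2" for i j :: int
    by (simp add: algebra_simps power2_eq_square)
  have cong: "[(i - a * j) * (i - b * j) = 1 * i ^ 2 + -(a + b) * i * j + -1 * j ^ 2] (mod int p)"
    for i j :: int
    unfolding factor cong_iff_dvd_diff using dvd_ab_plus_one by simp
  have "int p dvd 1 * i ^ 2 + -(a + b) * i * j + -1 * j ^ 2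
      \<longleftrightarrow> [i = a * j] (mod int p) \<or> [i = b * j] (mod int p)" for i j :: int
  proof -
    have "int p dvd 1 * i ^ 2 + -(a + b) * i * j + -1 * j ^ 2
        \<longleftrightarrow> int p dvd (i - a * j) * (i - b * j)"
      using cong[of i j] by (simp add: cong_dvd_iff)
    also have "\<dots> \<longleftrightarrow> int p dvd i - a * j \<or> int p dvd i - b * j"
      using prime by (simp add: prime_dvd_mult_iff)
    finally show ?thesis by (simp add: cong_iff_dvd_diff)
  qed
  then have pairs_eq: "brk_pairs a b p = {(i, j). i \<in> {1..(p - 1) div 2} \<and> j \<in> {1..(p - 1) div 2}
      \<and> \<not> int p dvd 1 * int i ^ 2 + -(a + b) * int i * int j + -1 * int j ^ 2}"
    unfolding brk_pairs_def by blast
  show ?thesis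
    unfolding brk_eq_prod_brk_pairs Tp_def pairs_eq
  proof (rule cong_prod, clarify)
    fix i j :: nat
    show "[(int i - a * int j) * (int i - b * int j)
        = 1 * int i ^ 2 + -(a + b) * int i * int j + -1 * int j ^ 2] (mod int p)"
      by (rule cong)
  qed
qed

lemma cong_swap_brk:
  assumes "i \<le> p"
  shows "[int j = a * int (p - i)] (mod int p) \<longleftrightarrow> [int i = b * int j] (mod int p)"
    and "[int j = b * int (p - i)] (mod int p) \<longleftrightarrow> [int i = a * int j] (mod int p)"
proof -
  have "[b * a = -1] (mod int p)" using ab by (simp add: mult.commute)
  then show "[int j = a * int (p - i)] (mod int p) \<longleftrightarrow> [int i = b * int j] (mod int p)"
    and "[int j = b * int (p - i)] (mod int p) \<longleftrightarrow> [int i = a * int j] (mod int p)"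
    using cong_swap_if_mult_cong_minus_one[OF ab] cong_swap_if_mult_cong_minus_one assms
    by (simp_all add: of_nat_diff)
qed

lemma brk_rows_eq:
  "(SIGMA x:{1..(p - 1) div 2}. brk_row a b p x)
    = brk_pairs a b p \<union> (\<lambda>(i, j). (j, p - i)) ` brk_pairs a b p"
  (is "?R = ?S \<union> ?g ` ?S")
proof
  define h where "h = (p - 1) div 2"
  have hp: "2 * h + 1 = p" unfolding h_def by (rule double_half_plus_one)
  show "?R \<subseteq> ?S \<union> ?g ` ?S"
  proof
    fix z assume "z \<in> ?R"
    then obtain x y where z: "z = (x, y)" and x: "x \<in> {1..h}" and y: "y \<in> {1..p - 1}"
      and c: "\<not> [int x = a * int y] (mod int p)" "\<not> [int x = b * int y] (mod int p)"
      unfolding brk_row_def h_def by auto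
    show "z \<in> ?S \<union> ?g ` ?S"
    proof (cases "y \<le> h")
      case True
      then show ?thesis using z x y c unfolding brk_pairs_def h_def by auto
    next
      case False
      have "p - y \<in> {1..h}" and "p - (p - y) = y"
        using False y hp by auto
      then have "(p - y, x) \<in> ?S"
        using x c cong_swap_brk[of "p - y" x] unfolding brk_pairs_def h_def by auto
      moreover have "z = ?g (p - y, x)" using z y by auto
      ultimately show ?thesis by blast
    qed
  qed
  show "?S \<union> ?g ` ?S \<subseteq> ?R"
  proof
    fix z assume "z \<in> ?S \<union> ?g ` ?S"
    then show "z \<in> ?R"
    proof
      assume "z \<in> ?S"
      then show ?thesis using hp unfolding brk_pairs_def brk_row_def h_def by auto
    next
      assume "z \<in> ?g ` ?S"
      then obtain i j where ij: "(i, j) \<in> ?S" and z: "z = (j, p - i)" by auto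
      then show ?thesis
        using hp cong_swap_brk[of i j] unfolding brk_pairs_def brk_row_def h_def by auto
    qed
  qed
qed

lemma brk_pairs_swap_disjoint:
  "brk_pairs a b p \<inter> (\<lambda>(i, j). (j, p - i)) ` brk_pairs a b p = {}"
  using double_half_plus_one unfolding brk_pairs_def by auto

lemma inj_on_brk_pairs_swap: "inj_on (\<lambda>(i, j). (j, p - i)) (brk_pairs a b p)"
proof (rule inj_onI)
  fix z z' assume z: "z \<in> brk_pairs a b p" and z': "z' \<in> brk_pairs a b p"
    and "(\<lambda>(i, j). (j, p - i)) z = (\<lambda>(i, j). (j, p - i)) z'"
  moreover have "fst z \<le> p" "fst z' \<le> p"
    using z z' double_half_plus_one unfolding brk_pairs_def by auto
  ultimately show "z = z'" by (auto simp: case_prod_beta prod_eq_iff)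
qed

lemma card_brk_rows:
  "(\<Sum>x\<in>{1..(p - 1) div 2}. card (brk_row a b p x)) = 2 * card (brk_pairs a b p)"
proof -
  have "(\<Sum>x\<in>{1..(p - 1) div 2}. card (brk_row a b p x))
      = card (SIGMA x:{1..(p - 1) div 2}. brk_row a b p x)"
    by (simp add: card_SigmaI)
  also have "\<dots> = 2 * card (brk_pairs a b p)"
    unfolding brk_rows_eq using brk_pairs_swap_disjoint inj_on_brk_pairs_swap
    by (simp add: card_Un_disjoint card_image)
  finally show ?thesis .
qed

lemma brk_rows_prod_cong:
  "[a ^ card (brk_pairs a b p) * brk a b p
    = (\<Prod>x\<in>{1..(p - 1) div 2}. \<Prod>y\<in>brk_row a b p x. int x - a * int y)] (mod int p)"
proof -
  define S where "S = brk_pairs a b p"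
  define g :: "nat \<times> nat \<Rightarrow> nat \<times> nat" where "g = (\<lambda>(i, j). (j, p - i))"
  define f where "f = (\<lambda>(x, y). int x - a * int y)"
  have "(\<Prod>x\<in>{1..(p - 1) div 2}. \<Prod>y\<in>brk_row a b p x. int x - a * int y)
      = prod f (S \<union> g ` S)"
    unfolding f_def S_def g_def brk_rows_eq[symmetric] by (simp add: prod.Sigma)
  also have "\<dots> = prod f S * prod (f \<circ> g) S"
    using brk_pairs_swap_disjoint inj_on_brk_pairs_swap unfolding S_def g_def
    by (simp add: prod.union_disjoint prod.reindex)
  finally have rows: "(\<Prod>x\<in>{1..(p - 1) div 2}. \<Prod>y\<in>brk_row a b p x. int x - a * int y)
      = prod f S * prod (f \<circ> g) S" .
  have "[prod (f \<circ> g) S = (\<Prod>(i, j)\<in>S. a * (int i - b * int j))] (mod int p)"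
  proof (rule cong_prod, clarify)
    fix i j assume "(i, j) \<in> S"
    then have "i \<le> p" using double_half_plus_one unfolding S_def brk_pairs_def by auto
    then have "(f \<circ> g) (i, j) - a * (int i - b * int j) = (a * b + 1) * int j - a * int p"
      unfolding f_def g_def by (simp add: of_nat_diff algebra_simps)
    then show "[(f \<circ> g) (i, j) = a * (int i - b * int j)] (mod int p)"
      unfolding cong_iff_dvd_diff using dvd_ab_plus_one by simp
  qed
  also have "(\<Prod>(i, j)\<in>S. a * (int i - b * int j)) = a ^ card S * (\<Prod>(i, j)\<in>S. int i - b * int j)"
    by (simp add: prod.distrib case_prod_beta)
  finally have "[prod f S * prod (f \<circ> g) S
      = prod f S * (a ^ card S * (\<Prod>(i, j)\<in>S. int i - b * int j))] (mod int p)"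
    by (rule cong_scalar_left)
  moreover have "brk a b p = prod f S * (\<Prod>(i, j)\<in>S. int i - b * int j)"
    unfolding brk_eq_prod_brk_pairs S_def f_def by (simp add: prod.distrib case_prod_beta)
  ultimately have "[a ^ card S * brk a b p = prod f S * prod (f \<circ> g) S] (mod int p)"
    by (simp add: cong_sym ac_simps)
  then show ?thesis unfolding rows S_def .
qed

lemma brk_row_prod_cong_if_same:
  assumes x: "x \<in> {1..p - 1}" and same: "[a = b] (mod int p)"
  shows "[int x * (\<Prod>y\<in>brk_row a b p x. int x - a * int y) = -1] (mod int p)
    \<and> card (brk_row a b p x) = p - 2"
proof -
  have "[a * int y = b * int y] (mod int p)" for y
    using same by (rule cong_mult) simp
  then have "[int x = b * int y] (mod int p) \<longleftrightarrow> [int x = a * int y] (mod int p)" for y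
    by (meson cong_sym cong_trans)
  then have "brk_row a b p x = {y \<in> {1..p - 1}. \<not> [int x = a * int y] (mod int p)}"
    unfolding brk_row_def by simp
  then show ?thesis
    using prod_affine_units_cong[OF prime not_dvd_a x] by simp
qed

lemma cong_b_mult_iff:
  assumes "x \<le> p" and "y < p"
  shows "[int x = b * int y] (mod int p) \<longleftrightarrow> int y = (a * int (p - x)) mod int p"
proof -
  have "[int x = b * int y] (mod int p) \<longleftrightarrow> [int y = a * int (p - x)] (mod int p)"
    using cong_swap_brk(1)[OF assms(1), of y] by blast
  also have "\<dots> \<longleftrightarrow> int y = (a * int (p - x)) mod int p"
    unfolding cong_def using assms(2) by simp
  finally show ?thesis .
qed

lemma brk_row_eq_Diff_if_distinct:
  assumes x: "x \<in> {1..p - 1}" and distinct: "\<not> [a = b] (mod int p)"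
  obtains y0 where "y0 \<in> {y \<in> {1..p - 1}. \<not> [int x = a * int y] (mod int p)}"
    and "brk_row a b p x = {y \<in> {1..p - 1}. \<not> [int x = a * int y] (mod int p)} - {y0}"
    and "[int x - a * int y0 = int x * (1 + a ^ 2)] (mod int p)"
proof -
  define y0 where "y0 = nat ((a * int (p - x)) mod int p)"
  have p0: "int p > 0" and "x \<le> p" using two_less_p x by auto
  have y0: "int y0 = (a * int (p - x)) mod int p"
    unfolding y0_def using p0 by simp
  have y0_less: "y0 < p"
  proof -
    have "int y0 < int p" unfolding y0 using p0 by simp
    then show ?thesis by simp
  qed
  have b_iff: "[int x = b * int y] (mod int p) \<longleftrightarrow> y = y0" if "y < p" for y
    using cong_b_mult_iff[OF \<open>x \<le> p\<close> that] unfolding y0[symmetric] by simp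
  have "y0 \<in> {1..p - 1}"
  proof (rule ccontr)
    assume "y0 \<notin> {1..p - 1}"
    then have "y0 = 0" using y0_less by auto
    then have "int p dvd int x" using b_iff[of y0] y0_less by (simp add: cong_0_iff)
    then show False using not_dvd_residue[OF x] by simp
  qed
  moreover have "\<not> [int x = a * int y0] (mod int p)"
  proof
    assume "[int x = a * int y0] (mod int p)"
    then have "[a * int y0 = b * int y0] (mod int p)"
      using b_iff[of y0] y0_less by (meson cong_sym cong_trans)
    then have "int p dvd (a - b) * int y0"
      by (simp add: cong_iff_dvd_diff algebra_simps)
    then show False
      using prime distinct not_dvd_residue[OF \<open>y0 \<in> {1..p - 1}\<close>]
      by (simp add: prime_dvd_mult_iff cong_iff_dvd_diff)
  qed
  moreover have "brk_row a b p x = {y \<in> {1..p - 1}. \<not> [int x = a * int y] (mod int p)} - {y0}"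
    unfolding brk_row_def using b_iff by auto
  moreover have "[int x - a * int y0 = int x * (1 + a ^ 2)] (mod int p)"
  proof -
    have "[int x - a * int y0 = int x - a * (a * (int p - int x))] (mod int p)"
      unfolding y0 using \<open>x \<le> p\<close> by (intro cong_diff cong_mult) (auto simp: cong_def of_nat_diff)
    also have "[int x - a * (a * (int p - int x)) = int x * (1 + a ^ 2)] (mod int p)"
      by (simp add: cong_iff_dvd_diff algebra_simps power2_eq_square)
    finally show ?thesis .
  qed
  ultimately show thesis
    using that by blast
qed

lemma brk_row_prod_cong_if_distinct:
  assumes x: "x \<in> {1..p - 1}" and distinct: "\<not> [a = b] (mod int p)"
  shows "[int x ^ 2 * (1 + a ^ 2) * (\<Prod>y\<in>brk_row a b p x. int x - a * int y) = -1] (mod int p)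
    \<and> card (brk_row a b p x) = p - 3"
proof -
  define D where "D = {y \<in> {1..p - 1}. \<not> [int x = a * int y] (mod int p)}"
  obtain y0 where y0_D: "y0 \<in> D" and row: "brk_row a b p x = D - {y0}"
    and y0_factor: "[int x - a * int y0 = int x * (1 + a ^ 2)] (mod int p)"
    unfolding D_def by (rule brk_row_eq_Diff_if_distinct[OF x distinct])
  have D: "[int x * (\<Prod>y\<in>D. int x - a * int y) = -1] (mod int p)" "card D = p - 2"
    using prod_affine_units_cong[OF prime not_dvd_a x] unfolding D_def by auto
  have "(\<Prod>y\<in>D. int x - a * int y)
      = (int x - a * int y0) * (\<Prod>y\<in>brk_row a b p x. int x - a * int y)"
    unfolding row by (rule prod.remove[OF _ y0_D]) (simp add: D_def)
  then have "[int x * (int x * (1 + a ^ 2) * (\<Prod>y\<in>brk_row a b p x. int x - a * int y))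
      = int x * (\<Prod>y\<in>D. int x - a * int y)] (mod int p)"
    by (simp only:) (intro cong_scalar_left cong_mult cong_refl cong_sym[OF y0_factor])
  then have "[int x * (int x * (1 + a ^ 2) * (\<Prod>y\<in>brk_row a b p x. int x - a * int y)) = -1]
      (mod int p)"
    using D(1) by (rule cong_trans)
  moreover have "card (brk_row a b p x) = p - 3"
    unfolding row using D(2) y0_D by simp
  ultimately show ?thesis
    by (simp add: power2_eq_square mult.assoc)
qed

lemma card_brk_pairs_if_distinct:
  assumes "\<not> [a = b] (mod int p)"
  shows "card (brk_pairs a b p) = (p - 1) div 2 * ((p - 1) div 2 - 1)"
proof -
  define h where "h = (p - 1) div 2"
  have hp: "2 * h + 1 = p" unfolding h_def by (rule double_half_plus_one)
  have "card (brk_row a b p x) = p - 3" if "x \<in> {1..h}" for x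
    using brk_row_prod_cong_if_distinct[OF _ assms, of x] that hp by auto
  then have "2 * card (brk_pairs a b p) = h * (p - 3)"
    using card_brk_rows unfolding h_def by simp
  moreover have "p - 3 = 2 * (h - 1)" using hp two_less_p by linarith
  ultimately show ?thesis unfolding h_def[symmetric] by simp
qed

lemma prod_brk_rows_cong_if_distinct:
  assumes distinct: "\<not> [a = b] (mod int p)"
  shows "[(1 + a ^ 2) ^ ((p - 1) div 2)
    * (\<Prod>x\<in>{1..(p - 1) div 2}. \<Prod>y\<in>brk_row a b p x. int x - a * int y) = -1] (mod int p)"
proof -
  define h where "h = (p - 1) div 2"
  define P where "P = (\<Prod>x\<in>{1..h}. \<Prod>y\<in>brk_row a b p x. int x - a * int y)"
  define F :: int where "F = fact h"
  have "x \<in> {1..h} \<Longrightarrow> x \<in> {1..p - 1}" for x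
    using double_half_plus_one unfolding h_def by auto
  then have "[(\<Prod>x\<in>{1..h}. int x ^ 2 * (1 + a ^ 2) * (\<Prod>y\<in>brk_row a b p x. int x - a * int y))
      = (\<Prod>x\<in>{1..h}. -1)] (mod int p)"
    using brk_row_prod_cong_if_distinct[OF _ distinct] by (intro cong_prod) blast
  moreover have "(\<Prod>x\<in>{1..h}. int x ^ 2 * (1 + a ^ 2) * (\<Prod>y\<in>brk_row a b p x. int x - a * int y))
      = F ^ 2 * ((1 + a ^ 2) ^ h * P)"
    unfolding F_def P_def by (simp add: prod.distrib fact_prod prod_power_distrib)
  ultimately have "[F ^ 2 * ((1 + a ^ 2) ^ h * P) = (-1) ^ h] (mod int p)"
    by simp
  moreover have "[F ^ 2 * ((1 + a ^ 2) ^ h * P) = (-1) ^ (h + 1) * ((1 + a ^ 2) ^ h * P)] (mod int p)"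
    using half_factorial_square_cong[OF prime odd] unfolding F_def h_def by (rule cong_mult) simp
  ultimately have "[(-1) ^ (h + 1) * ((1 + a ^ 2) ^ h * P) = (-1) ^ h] (mod int p)"
    by (meson cong_sym cong_trans)
  then have "[(1 + a ^ 2) ^ h * P = (-1) ^ (h + 1) * (-1) ^ h] (mod int p)"
    by (simp only: minus_one_power_mult_cong_iff)
  moreover have "(-1 :: int) ^ (h + 1) * (-1) ^ h = -1"
    by (induction h) simp_all
  ultimately show ?thesis
    unfolding P_def h_def by simp
qed

lemma brk_cong_if_distinct:
  assumes distinct: "\<not> [a = b] (mod int p)"
  shows "[a ^ ((p - 1) div 2 * ((p - 1) div 2)) * (a - b) ^ ((p - 1) div 2) * brk a b p = -1]
    (mod int p)"
proof -
  define h where "h = (p - 1) div 2"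
  define P where "P = (\<Prod>x\<in>{1..h}. \<Prod>y\<in>brk_row a b p x. int x - a * int y)"
  have "[(a * (a - b)) ^ h = (1 + a ^ 2) ^ h] (mod int p)"
    by (rule cong_pow[OF mult_diff_cong_one_plus_square])
  moreover have "[a ^ (h * (h - 1)) * brk a b p = P] (mod int p)"
    using brk_rows_prod_cong card_brk_pairs_if_distinct[OF distinct] unfolding P_def h_def by simp
  ultimately have "[(a * (a - b)) ^ h * (a ^ (h * (h - 1)) * brk a b p) = (1 + a ^ 2) ^ h * P] (mod int p)"
    by (rule cong_mult)
  also have "[(1 + a ^ 2) ^ h * P = -1] (mod int p)"
    using prod_brk_rows_cong_if_distinct[OF distinct] unfolding P_def h_def .
  finally have "[(a * (a - b)) ^ h * (a ^ (h * (h - 1)) * brk a b p) = -1] (mod int p)" .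
  moreover have "h + h * (h - 1) = h * h" by (cases h) simp_all
  then have "(a * (a - b)) ^ h * (a ^ (h * (h - 1)) * brk a b p)
      = a ^ (h * h) * (a - b) ^ h * brk a b p"
    by (simp add: power_mult_distrib ac_simps flip: power_add)
  ultimately show ?thesis
    unfolding h_def by (simp only:)
qed

lemma brk_cong_if_same:
  assumes same: "[a = b] (mod int p)"
  shows "[fact ((p - 1) div 2) * (a ^ ((p - 1) div 2 * (p - 2) div 2) * brk a b p)
    = (-1) ^ ((p - 1) div 2)] (mod int p)"
proof -
  define h where "h = (p - 1) div 2"
  define R where "R x = (\<Prod>y\<in>brk_row a b p x. int x - a * int y)" for x
  have hp: "2 * h + 1 = p" unfolding h_def by (rule double_half_plus_one)
  have row: "[int x * R x = -1] (mod int p)" "card (brk_row a b p x) = p - 2"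
    if "x \<in> {1..h}" for x
    using brk_row_prod_cong_if_same[OF _ same, of x] that hp unfolding R_def by auto
  have "2 * card (brk_pairs a b p) = h * (p - 2)"
    using card_brk_rows row(2) unfolding h_def by simp
  then have card: "card (brk_pairs a b p) = h * (p - 2) div 2" by simp
  have "[a ^ (h * (p - 2) div 2) * brk a b p = (\<Prod>x\<in>{1..h}. R x)] (mod int p)"
    using brk_rows_prod_cong unfolding card R_def h_def .
  then have "[fact h * (a ^ (h * (p - 2) div 2) * brk a b p) = fact h * (\<Prod>x\<in>{1..h}. R x)] (mod int p)"
    by (rule cong_scalar_left)
  also have "fact h * (\<Prod>x\<in>{1..h}. R x) = (\<Prod>x\<in>{1..h}. int x * R x)"
    by (simp add: prod.distrib fact_prod)
  also have "[(\<Prod>x\<in>{1..h}. int x * R x) = (\<Prod>x\<in>{1..h}. -1)] (mod int p)"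
    using row(1) by (rule cong_prod)
  finally show ?thesis
    unfolding h_def by simp
qed

lemma brk_cong_Legendre_if_1_mod_4:
  assumes "[p = 1] (mod 4)" and "\<not> int p dvd a - b"
  shows "[- brk a b p = Legendre (a - b) (int p)] (mod int p)"
proof -
  define h where "h = (p - 1) div 2"
  have hp: "2 * h + 1 = p" unfolding h_def by (rule double_half_plus_one)
  have "even h" using assms(1) hp unfolding cong_def by presburger
  then obtain m where m: "h = 2 * m" by (rule evenE)
  have "p - 1 = 2 * h" using hp by simp
  then have "h * h = (p - 1) * m" using m by simp
  then have "[a ^ (h * h) = 1] (mod int p)"
    using cong_pow[OF fermat_theorem_int[OF prime not_dvd_a], of m] by (simp add: power_mult)
  then have "[a ^ (h * h) * ((a - b) ^ h * brk a b p) = 1 * ((a - b) ^ h * brk a b p)] (mod int p)"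
    by (rule cong_mult) simp
  moreover have "\<not> [a = b] (mod int p)" using assms(2) by (simp add: cong_iff_dvd_diff)
  then have "[a ^ (h * h) * ((a - b) ^ h * brk a b p) = -1] (mod int p)"
    using brk_cong_if_distinct unfolding h_def by (simp add: mult.assoc)
  ultimately have "[1 * ((a - b) ^ h * brk a b p) = -1] (mod int p)"
    by (meson cong_sym cong_trans)
  then have "[(a - b) ^ h * brk a b p = -1] (mod int p)"
    by simp
  then show ?thesis
    using minus_cong_Legendre_if_power_mult_cong[OF prime two_less_p assms(2)] unfolding h_def
    by blast
qed

lemma brk_cong_Legendre_if_3_mod_4:
  assumes "[p = 3] (mod 4)"
  shows "[- brk a b p = Legendre (a * (a - b)) (int p)] (mod int p)
    \<and> Legendre (a * (a - b)) (int p) = Legendre (a ^ 2 + 1) (int p)"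
proof -
  define h where "h = (p - 1) div 2"
  have hp: "2 * h + 1 = p" unfolding h_def by (rule double_half_plus_one)
  have "odd h" using assms hp unfolding cong_def by presburger
  then obtain m where m: "h = 2 * m + 1" by (rule oddE)
  have "p - 1 = 2 * h" using hp by simp
  then have fermat: "[a ^ (2 * h) = 1] (mod int p)"
    using fermat_theorem_int[OF prime not_dvd_a] by simp
  have distinct: "\<not> [a = b] (mod int p)"
  proof
    assume "[a = b] (mod int p)"
    then have "[a ^ (2 * h) = -1] (mod int p)"
      using cong_pow[OF square_cong_minus_one_if_same, of h] \<open>odd h\<close> by (simp add: power_mult)
    then have "[-1 = 1] (mod int p)"
      using fermat by (meson cong_sym cong_trans)
    then show False
      using two_less_p by (auto simp: cong_iff_dvd_diff dest: zdvd_imp_le)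
  qed
  have "a ^ (h * h) = a ^ h * (a ^ (2 * h)) ^ m"
  proof -
    have "h * h = h + 2 * h * m" using m by (simp add: algebra_simps)
    then show ?thesis by (simp add: power_add power_mult)
  qed
  also have "[a ^ h * (a ^ (2 * h)) ^ m = a ^ h * 1 ^ m] (mod int p)"
    by (intro cong_scalar_left cong_pow fermat)
  finally have "[a ^ (h * h) * ((a - b) ^ h * brk a b p) = a ^ h * ((a - b) ^ h * brk a b p)] (mod int p)"
    by (intro cong_mult cong_refl) simp
  moreover have "[a ^ (h * h) * ((a - b) ^ h * brk a b p) = -1] (mod int p)"
    using brk_cong_if_distinct[OF distinct] unfolding h_def by (simp add: mult.assoc)
  ultimately have "[a ^ h * ((a - b) ^ h * brk a b p) = -1] (mod int p)"
    by (meson cong_sym cong_trans)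
  then have "[(a * (a - b)) ^ h * brk a b p = -1] (mod int p)"
    by (simp add: power_mult_distrib mult.assoc)
  moreover have "\<not> int p dvd a * (a - b)"
    using distinct not_dvd_a prime by (simp add: prime_dvd_mult_iff cong_iff_dvd_diff)
  ultimately have "[- brk a b p = Legendre (a * (a - b)) (int p)] (mod int p)"
    using minus_cong_Legendre_if_power_mult_cong[OF prime two_less_p] unfolding h_def by blast
  moreover have "Legendre (a * (a - b)) (int p) = Legendre (a ^ 2 + 1) (int p)"
    using Legendre_cong[OF mult_diff_cong_one_plus_square] by (simp add: add.commute)
  ultimately show ?thesis ..
qed

lemma brk_cong_if_same_even:
  assumes same: "[a = b] (mod int p)" and "even ((p - 1) div 2)"
  defines "N \<equiv> (p - 1) div 2 * (p - 2) div 2"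
  shows "[fact ((p - 1) div 2) * ((-1) ^ (N div 2) * a ^ (N mod 2) * brk a b p) = 1] (mod int p)"
proof -
  have "[a ^ N = (-1) ^ (N div 2) * a ^ (N mod 2)] (mod int p)"
    by (rule power_cong_if_square_cong_minus_one[OF square_cong_minus_one_if_same[OF same]])
  then have "[fact ((p - 1) div 2) * (a ^ N * brk a b p)
      = fact ((p - 1) div 2) * ((-1) ^ (N div 2) * a ^ (N mod 2) * brk a b p)] (mod int p)"
    by (intro cong_scalar_left cong_mult cong_refl)
  moreover have "[fact ((p - 1) div 2) * (a ^ N * brk a b p) = 1] (mod int p)"
    using brk_cong_if_same[OF same] assms(2) unfolding N_def by (simp add: minus_one_power_iff)
  ultimately show ?thesis
    by (meson cong_sym cong_trans)
qed

lemma brk_cong_if_same_1_mod_8: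
  assumes same: "[a = b] (mod int p)" and "[p = 1] (mod 8)"
  shows "[brk a b p = (-1) ^ ((p + 7) div 8) * fact ((p - 1) div 2)] (mod int p)"
proof -
  define F :: int where "F = fact ((p - 1) div 2)"
  define N where "N = (p - 1) div 2 * (p - 2) div 2"
  have "p mod 8 = 1" using assms(2) by (simp add: cong_def)
  then have "\<exists>q. p = 8 * q + 9" using two_less_p by presburger
  then obtain q where q: "p = 8 * q + 9" ..
  have h: "(p - 1) div 2 = 4 * q + 4" using q by simp
  define M where "M = (q + 1) + 2 * ((q + 1) * (4 * q + 3))"
  have "(4 * q + 4) * (p - 2) = 2 * (2 * M)"
    unfolding M_def using q by (simp add: algebra_simps)
  then have "N = 2 * M"
    unfolding N_def h by (simp only:)
  then have N: "N div 2 = M" "N mod 2 = 0"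
    by simp_all
  have "[F * ((-1) ^ (N div 2) * a ^ (N mod 2) * brk a b p) = 1] (mod int p)"
    unfolding F_def N_def using h by (intro brk_cong_if_same_even same) simp
  then have "[F * ((-1) ^ (q + 1) * brk a b p) = 1] (mod int p)"
    unfolding N M_def minus_one_power_add_mult_two by simp
  moreover have "[F ^ 2 = -1] (mod int p)"
    using half_factorial_square_cong[OF prime odd] h unfolding F_def by simp
  ultimately have "[(-1) ^ (q + 1) * brk a b p = - (F * 1)] (mod int p)"
    using cong_eq_minus_mult_if_square_cong_minus_one by blast
  then show ?thesis
    unfolding minus_one_power_mult_cong_iff F_def using q by simp
qed

lemma brk_cong_if_same_5_mod_8:
  assumes "[p = 5] (mod 8)"
    and a: "[a = (-1) ^ k * fact ((p - 1) div 2)] (mod int p)"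
    and b: "[b = (-1) ^ k * fact ((p - 1) div 2)] (mod int p)"
  shows "[brk a b p = (-1) ^ (k + (p - 5) div 8)] (mod int p)"
proof -
  define F :: int where "F = fact ((p - 1) div 2)"
  define N where "N = (p - 1) div 2 * (p - 2) div 2"
  define s where "s = p div 8"
  define Z where "Z = (-1) ^ (s + 1 + k) * brk a b p"
  have same: "[a = b] (mod int p)" using a b by (meson cong_sym cong_trans)
  have "p mod 8 = 5" using assms(1) by (simp add: cong_def)
  then have p: "p = 8 * s + 5" unfolding s_def by presburger
  have h: "(p - 1) div 2 = 4 * s + 2" using p by simp
  define M where "M = (s + 1) + 2 * (4 * s * s + 3 * s)"
  have "(4 * s + 2) * (p - 2) = 2 * (2 * M + 1)"
    unfolding M_def using p by (simp add: algebra_simps)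
  then have "N = 2 * M + 1"
    unfolding N_def h by (simp only:) simp
  then have N: "N div 2 = M" "N mod 2 = 1"
    by simp_all
  have "[F * ((-1) ^ (N div 2) * a ^ (N mod 2) * brk a b p) = 1] (mod int p)"
    unfolding F_def N_def using h by (intro brk_cong_if_same_even same) simp
  then have "[F * ((-1) ^ (s + 1) * a * brk a b p) = 1] (mod int p)"
    unfolding N M_def minus_one_power_add_mult_two by simp
  moreover have "[F * ((-1) ^ (s + 1) * a * brk a b p) = F * ((-1) ^ (s + 1) * ((-1) ^ k * F) * brk a b p)]
      (mod int p)"
    by (intro cong_scalar_left cong_mult cong_refl a[folded F_def])
  moreover have "F * ((-1) ^ (s + 1) * ((-1) ^ k * F) * brk a b p) = F * (F * Z)"
    unfolding Z_def by (simp add: power_add ac_simps)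
  ultimately have "[F * (F * Z) = 1] (mod int p)"
    by (metis cong_sym cong_trans)
  moreover have "[F ^ 2 = -1] (mod int p)"
    using half_factorial_square_cong[OF prime odd] h unfolding F_def by simp
  then have "[F ^ 2 * Z = -1 * Z] (mod int p)"
    by (rule cong_mult) simp
  then have "[F * (F * Z) = - Z] (mod int p)"
    by (simp add: power2_eq_square mult.assoc)
  ultimately have "[- Z = 1] (mod int p)"
    by (meson cong_sym cong_trans)
  then have "[Z = -1] (mod int p)"
    using cong_minus_minus_iff[of Z "-1"] by simp
  then show ?thesis
    unfolding Z_def minus_one_power_mult_cong_iff using p by (simp add: ac_simps)
qed

end

theorem theorem1p3:
  fixes p :: nat and a b :: int
  assumes "prime p" and "odd p" and "[a * b = -1] (mod int p)"
  shows "[brk a b p = Tp p 1 (-(a+b)) (-1)] (mod int p)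
    \<and> ([p = 1] (mod 4) \<longrightarrow> \<not> int p dvd (a - b) \<longrightarrow>
          [- brk a b p = Legendre (a - b) (int p)] (mod int p))
    \<and> ([p = 3] (mod 4) \<longrightarrow>
          [- brk a b p = Legendre (a * (a - b)) (int p)] (mod int p)
          \<and> Legendre (a * (a - b)) (int p) = Legendre (a ^ 2 + 1) (int p))
    \<and> ([a = b] (mod int p) \<longrightarrow> [p = 1] (mod 8) \<longrightarrow>
          [brk a b p = (-1) ^ ((p + 7) div 8) * fact ((p - 1) div 2)] (mod int p))
    \<and> (\<forall>k::nat. k \<in> {0, 1} \<longrightarrow> [p = 5] (mod 8) \<longrightarrow>
          [a = (-1) ^ k * fact ((p - 1) div 2)] (mod int p) \<longrightarrow>
          [b = (-1) ^ k * fact ((p - 1) div 2)] (mod int p) \<longrightarrow>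
          [brk a b p = (-1) ^ (k + (p - 5) div 8)] (mod int p))"
  using brk_cong_Tp[OF assms] brk_cong_Legendre_if_1_mod_4[OF assms]
    brk_cong_Legendre_if_3_mod_4[OF assms] brk_cong_if_same_1_mod_8[OF assms]
    brk_cong_if_same_5_mod_8[OF assms]
  by blast

end
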